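(* Let $X$ be a separable real Banach space and let $Y$ be a real Banach space such that no closed subspace of $Y$ is isomorphic to $\ell_1$. Let $\varepsilon>0$ and let $f:X\to Y$ be an $\varepsilon$-isometry. Then there exists an isometry from $X$ into the bidual $Y^{**}$, i.e. a map $U:X\to Y^{**}$ with $\|U(x)-U(y)\|=\|x-y\|$ for all $x,y\in X$.
   Context: For $\varepsilon>0$, a map $f:X\to Y$ between Banach spaces is an $\varepsilon$-isometry if $\big|\|f(x)-f(y)\|-\|x-y\|\big|\le\varepsilon$ for all $x,y\in X$. An isometry is a map $g$ with $\|g(x)-g(y)\|=\|x-y\|$ for all $x,y$ (not required to be linear). *)

theory Defs
  imports "HOL-Analysis.Analysis"
begin

definition ell1 :: "(nat \<Rightarrow> real) set" where
  "ell1 = {a. summable (\<lambda>n. \<bar>a n\<bar>)}"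

definition ell1_norm :: "(nat \<Rightarrow> real) \<Rightarrow> real" where
  "ell1_norm a = (\<Sum>n. \<bar>a n\<bar>)"

definition isomorphic_to_ell1 :: "'b::real_normed_vector set \<Rightarrow> bool" where
  "isomorphic_to_ell1 S \<longleftrightarrow>
     (\<exists>T :: (nat \<Rightarrow> real) \<Rightarrow> 'b.
        bij_betw T ell1 S \<and>
        (\<forall>a\<in>ell1. \<forall>b\<in>ell1. T (\<lambda>n. a n + b n) = T a + T b) \<and>
        (\<forall>a\<in>ell1. \<forall>c::real. T (\<lambda>n. c * a n) = c *\<^sub>R T a) \<and>
        (\<exists>c C. 0 < c \<and> 0 < C \<and>
           (\<forall>a\<in>ell1. c * ell1_norm a \<le> norm (T a) \<and> norm (T a) \<le> C * ell1_norm a)))"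

definition eps_isometry :: "real \<Rightarrow> ('a::real_normed_vector \<Rightarrow> 'b::real_normed_vector) \<Rightarrow> bool" where
  "eps_isometry \<epsilon> f \<longleftrightarrow> (\<forall>x y. \<bar>norm (f x - f y) - norm (x - y)\<bar> \<le> \<epsilon>)"

end

theory Submission
  imports Defs
begin

text \<open>Fix a Banach limit \<open>Lim\<close> on bounded real sequences and let \<open>U x\<close> be the functional
  \<open>\<phi> \<mapsto> Lim\<^sub>n \<phi> (f (n x) - f 0) / n\<close> on \<open>Y\<^sup>*\<close>. Rescaling by \<open>n\<close> kills the additive error \<open>\<epsilon>\<close>,
  so \<open>U\<close> is 1-Lipschitz. For the reverse inequality, suppose first that the norm is differentiable
  at \<open>u = x - y\<close> along \<open>y\<close>. The horofunctions \<open>k\<close>, \<open>m\<close> of the images under \<open>f\<close> of the rays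
  \<open>N u\<close> and \<open>-N u\<close> (limits of \<open>\<parallel>q - f(\<plusminus>N u)\<parallel> - N\<parallel>u\<parallel>\<close>) are convex, \<open>k\<close> is 1-Lipschitz and
  \<open>k + m + \<epsilon> \<ge> 0\<close>, so a Hahn--Banach sandwich yields a functional \<open>\<phi>\<close> of norm at most 1 with
  \<open>-m - \<epsilon> \<le> \<phi> + c \<le> k\<close>. Evaluating at \<open>f (n x)\<close> and \<open>f (n y)\<close>, the differentiability makes the
  two one-sided derivatives of the norm cancel and gives \<open>\<phi> (f (n y) - f (n x)) \<ge> n \<parallel>u\<parallel> - 3 \<epsilon>\<close>,
  hence \<open>\<parallel>U x - U y\<parallel> \<ge> \<parallel>x - y\<parallel>\<close>. Such pairs are dense, because along a line the two
  one-sided derivatives of the norm can differ only at countably many points.\<close>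

section \<open>Hahn--Banach for sublinear functionals\<close>

definition dominated_linear_graph :: "('v::real_vector \<Rightarrow> real) \<Rightarrow> ('v \<times> real) set \<Rightarrow> bool" where
  "dominated_linear_graph p G \<longleftrightarrow>
     (\<forall>x a b. (x, a) \<in> G \<longrightarrow> (x, b) \<in> G \<longrightarrow> a = b) \<and>
     (\<forall>x a y b. (x, a) \<in> G \<longrightarrow> (y, b) \<in> G \<longrightarrow> (x + y, a + b) \<in> G) \<and>
     (\<forall>x a c. (x, a) \<in> G \<longrightarrow> (c *\<^sub>R x, c * a) \<in> G) \<and>
     (\<forall>x a. (x, a) \<in> G \<longrightarrow> a \<le> p x)"

lemma dominated_linear_graphD:
  assumes "dominated_linear_graph p G"
  shows dominated_linear_graph_unique: "\<And>x a b. (x, a) \<in> G \<Longrightarrow> (x, b) \<in> G \<Longrightarrow> a = b"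
    and dominated_linear_graph_add: "\<And>x a y b. (x, a) \<in> G \<Longrightarrow> (y, b) \<in> G \<Longrightarrow> (x + y, a + b) \<in> G"
    and dominated_linear_graph_scaleR: "\<And>x a c. (x, a) \<in> G \<Longrightarrow> (c *\<^sub>R x, c * a) \<in> G"
    and dominated_linear_graph_le: "\<And>x a. (x, a) \<in> G \<Longrightarrow> a \<le> p x"
  using assms unfolding dominated_linear_graph_def by blast+

lemma dominated_linear_graph_chain_Union:
  assumes "C \<in> chains {G. dominated_linear_graph p G}"
  shows "dominated_linear_graph p (\<Union>C)"
proof -
  have dom: "\<And>G. G \<in> C \<Longrightarrow> dominated_linear_graph p G"
    using assms by (auto simp: chains_def)
  have common: "\<exists>G\<in>C. A \<subseteq> G \<and> B \<subseteq> G" if "A \<in> C" "B \<in> C" for A B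
  proof -
    have "A \<subseteq> B \<or> B \<subseteq> A"
      using assms that unfolding chains_def chain_subset_def by blast
    then show ?thesis using that by blast
  qed
  show ?thesis
    unfolding dominated_linear_graph_def
  proof (intro conjI allI impI)
    fix x a b assume "(x, a) \<in> \<Union>C" "(x, b) \<in> \<Union>C"
    then obtain A B where "A \<in> C" "B \<in> C" "(x, a) \<in> A" "(x, b) \<in> B"
      by blast
    then obtain G where "G \<in> C" "(x, a) \<in> G" "(x, b) \<in> G"
      using common by blast
    then show "a = b" using dominated_linear_graph_unique[OF dom] by blast
  next
    fix x a y b assume "(x, a) \<in> \<Union>C" "(y, b) \<in> \<Union>C"
    then obtain A B where "A \<in> C" "B \<in> C" "(x, a) \<in> A" "(y, b) \<in> B"
      by blast
    then obtain G where "G \<in> C" "(x, a) \<in> G" "(y, b) \<in> G"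
      using common by blast
    then show "(x + y, a + b) \<in> \<Union>C" using dominated_linear_graph_add[OF dom] by blast
  next
    fix x a c assume "(x, a) \<in> \<Union>C"
    then show "(c *\<^sub>R x, c * a) \<in> \<Union>C" using dominated_linear_graph_scaleR[OF dom] by blast
  next
    fix x a assume "(x, a) \<in> \<Union>C"
    then show "a \<le> p x" using dominated_linear_graph_le[OF dom] by blast
  qed
qed

lemma dominated_linear_graph_extension_le:
  fixes p :: "'v::real_vector \<Rightarrow> real"
  assumes hom: "\<And>c x. c > 0 \<Longrightarrow> p (c *\<^sub>R x) = c * p x"
    and G: "dominated_linear_graph p G" and xa: "(x, a) \<in> G"
    and below: "\<And>y d. (y, d) \<in> G \<Longrightarrow> d - p (y - x0) \<le> c"
    and above: "\<And>y d. (y, d) \<in> G \<Longrightarrow> c \<le> p (y + x0) - d"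
  shows "a + t * c \<le> p (x + t *\<^sub>R x0)"
proof (cases t "0::real" rule: linorder_cases)
  case less
  then have s: "- t > 0" by simp
  have "a / (- t) - p ((1 / (- t)) *\<^sub>R x - x0) \<le> c"
    using below[OF dominated_linear_graph_scaleR[OF G xa, of "1 / (- t)"]] by simp
  then have "a - (- t) * p ((1 / (- t)) *\<^sub>R x - x0) \<le> (- t) * c"
    using s by (simp add: field_simps)
  also have "(- t) *\<^sub>R ((1 / (- t)) *\<^sub>R x - x0) = x + t *\<^sub>R x0"
    using s by (simp add: algebra_simps)
  then have "(- t) * p ((1 / (- t)) *\<^sub>R x - x0) = p (x + t *\<^sub>R x0)"
    using hom[OF s] by metis
  finally show ?thesis by simp
next
  case equal
  then show ?thesis using dominated_linear_graph_le[OF G xa] by simp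
next
  case greater
  have "c \<le> p ((1 / t) *\<^sub>R x + x0) - a / t"
    using above[OF dominated_linear_graph_scaleR[OF G xa, of "1 / t"]] by simp
  then have "t * c \<le> t * p ((1 / t) *\<^sub>R x + x0) - a"
    using greater by (simp add: field_simps)
  also have "t *\<^sub>R ((1 / t) *\<^sub>R x + x0) = x + t *\<^sub>R x0"
    using greater by (simp add: algebra_simps)
  then have "t * p ((1 / t) *\<^sub>R x + x0) = p (x + t *\<^sub>R x0)"
    using hom[OF greater] by metis
  finally show ?thesis by simp
qed

lemma dominated_linear_graph_decomp_unique:
  assumes G: "dominated_linear_graph p G" and x0: "x0 \<notin> fst ` G"
    and xa: "(x, a) \<in> G" and yb: "(y, b) \<in> G" and eq: "x + t *\<^sub>R x0 = y + s *\<^sub>R x0"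
  shows "x = y \<and> t = s"
proof (rule ccontr)
  note scale = dominated_linear_graph_scaleR[OF G]
  assume "\<not> (x = y \<and> t = s)"
  with eq have ts: "t \<noteq> s" by auto
  have "(t - s) *\<^sub>R x0 = y - x"
    using eq by (simp add: algebra_simps)
  moreover have "x0 = (1 / (t - s)) *\<^sub>R ((t - s) *\<^sub>R x0)"
    using ts by simp
  ultimately have "x0 = (1 / (t - s)) *\<^sub>R (y - x)"
    by simp
  moreover have "(y - x, b - a) \<in> G"
    using dominated_linear_graph_add[OF G yb scale[OF xa, of "-1"]] by simp
  ultimately have "(x0, (1 / (t - s)) * (b - a)) \<in> G"
    using scale by metis
  with x0 show False by force
qed

lemma dominated_linear_graph_extension:
  fixes p :: "'v::real_vector \<Rightarrow> real"
  assumes hom: "\<And>c x. c > 0 \<Longrightarrow> p (c *\<^sub>R x) = c * p x"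
    and G: "dominated_linear_graph p G" and x0: "x0 \<notin> fst ` G"
    and below: "\<And>y d. (y, d) \<in> G \<Longrightarrow> d - p (y - x0) \<le> c"
    and above: "\<And>y d. (y, d) \<in> G \<Longrightarrow> c \<le> p (y + x0) - d"
  shows "dominated_linear_graph p {(x + t *\<^sub>R x0, a + t * c) | x a t. (x, a) \<in> G}"
    (is "dominated_linear_graph p ?G'")
proof -
  have G'I: "(x + t *\<^sub>R x0, a + t * c) \<in> ?G'" if "(x, a) \<in> G" for x a t
    using that by blast
  show ?thesis
    unfolding dominated_linear_graph_def
  proof (intro conjI allI impI)
    fix z a b assume "(z, a) \<in> ?G'" "(z, b) \<in> ?G'"
    then obtain x a' t y b' s where "(x, a') \<in> G" "(y, b') \<in> G"
      "z = x + t *\<^sub>R x0" "a = a' + t * c" "z = y + s *\<^sub>R x0" "b = b' + s * c"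
      by blast
    then show "a = b"
      using dominated_linear_graph_decomp_unique[OF G x0, of x a' y b' t s]
        dominated_linear_graph_unique[OF G] by auto
  next
    fix z a w b assume "(z, a) \<in> ?G'" "(w, b) \<in> ?G'"
    then obtain x a' t y b' s where "(x, a') \<in> G" "(y, b') \<in> G"
      "z = x + t *\<^sub>R x0" "a = a' + t * c" "w = y + s *\<^sub>R x0" "b = b' + s * c"
      by blast
    then show "(z + w, a + b) \<in> ?G'"
      using G'I[OF dominated_linear_graph_add[OF G], of x a' y b' "t + s"] by (simp add: algebra_simps)
  next
    fix z a r assume "(z, a) \<in> ?G'"
    then obtain x a' t where "(x, a') \<in> G" "z = x + t *\<^sub>R x0" "a = a' + t * c"
      by blast
    then show "(r *\<^sub>R z, r * a) \<in> ?G'"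
      using G'I[OF dominated_linear_graph_scaleR[OF G], of x a' r "r * t"] by (simp add: algebra_simps)
  next
    fix z a assume "(z, a) \<in> ?G'"
    then obtain x a' t where "(x, a') \<in> G" "z = x + t *\<^sub>R x0" "a = a' + t * c"
      by blast
    then show "a \<le> p z"
      using dominated_linear_graph_extension_le[OF hom G _ below above] by simp
  qed
qed

lemma dominated_linear_graph_extend:
  fixes p :: "'v::real_vector \<Rightarrow> real"
  assumes sub: "\<And>x y. p (x + y) \<le> p x + p y"
    and hom: "\<And>c x. c > 0 \<Longrightarrow> p (c *\<^sub>R x) = c * p x"
    and G: "dominated_linear_graph p G" and G0: "(0, 0) \<in> G" and x0: "x0 \<notin> fst ` G"
  shows "\<exists>G'. dominated_linear_graph p G' \<and> G \<subset> G'"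
proof -
  have gap: "d - p (y - x0) \<le> p (z + x0) - e" if "(y, d) \<in> G" "(z, e) \<in> G" for y d z e
  proof -
    have "d + e \<le> p (y + z)"
      using dominated_linear_graph_le[OF G dominated_linear_graph_add[OF G that]] .
    also have "\<dots> \<le> p (y - x0) + p (z + x0)" using sub[of "y - x0" "z + x0"] by simp
    finally show ?thesis by simp
  qed
  define D where "D = {d - p (y - x0) | y d. (y, d) \<in> G}"
  define c where "c = Sup D"
  have D: "D \<noteq> {}" "bdd_above D"
    unfolding D_def bdd_above_def using G0 gap[OF _ G0] by blast+
  have below: "d - p (y - x0) \<le> c" if "(y, d) \<in> G" for y d
    unfolding c_def using D that by (auto simp: D_def intro!: cSup_upper)
  have above: "c \<le> p (z + x0) - e" if "(z, e) \<in> G" for z e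
    unfolding c_def using D that gap by (auto simp: D_def intro!: cSup_least)
  define G' where "G' = {(x + t *\<^sub>R x0, a + t * c) | x a t. (x, a) \<in> G}"
  have "G \<subseteq> G'"
    unfolding G'_def by (force intro: exI[of _ 0])
  moreover have "(x0, c) \<in> G' - G"
    unfolding G'_def using G0 x0 by (force intro: exI[of _ 1])
  ultimately show ?thesis
    using dominated_linear_graph_extension[OF hom G x0 below above] unfolding G'_def by blast
qed

theorem Hahn_Banach_sublinear:
  fixes p :: "'v::real_vector \<Rightarrow> real"
  assumes sub: "\<And>x y. p (x + y) \<le> p x + p y"
    and hom: "\<And>c x. c > 0 \<Longrightarrow> p (c *\<^sub>R x) = c * p x"
  shows "\<exists>L. linear L \<and> (\<forall>x. L x \<le> p x)"
proof -
  have "\<exists>M\<in>{G. dominated_linear_graph p G}. \<forall>G\<in>{G. dominated_linear_graph p G}. M \<subseteq> G \<longrightarrow> G = M"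
    by (rule Zorn_Lemma) (use dominated_linear_graph_chain_Union in blast)
  then obtain M where M: "dominated_linear_graph p M"
    and max: "\<And>G. dominated_linear_graph p G \<Longrightarrow> M \<subseteq> G \<Longrightarrow> G = M"
    by auto
  have "p 0 = 0" using hom[of 2 0] by simp
  then have "dominated_linear_graph p {(0, 0)}"
    unfolding dominated_linear_graph_def by auto
  then have "M \<noteq> {}" using max by blast
  then obtain z a where "(z, a) \<in> M" by auto
  then have M0: "(0, 0) \<in> M" using dominated_linear_graph_scaleR[OF M, of z a 0] by simp
  have total: "\<exists>a. (x, a) \<in> M" for x
  proof (rule ccontr)
    assume "\<nexists>a. (x, a) \<in> M"
    then have "x \<notin> fst ` M" by force
    then show False
      using dominated_linear_graph_extend[OF sub hom M M0] max by blast
  qed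
  define L where "L x = (THE a. (x, a) \<in> M)" for x
  have LM: "(x, a) \<in> M \<longleftrightarrow> a = L x" for x a
  proof -
    obtain b where b: "(x, b) \<in> M" using total by blast
    then have "L x = b"
      unfolding L_def using dominated_linear_graph_unique[OF M] by (intro the_equality) blast+
    then show ?thesis using b dominated_linear_graph_unique[OF M] by blast
  qed
  have "linear L"
    by (rule linearI) (use LM dominated_linear_graph_add[OF M] dominated_linear_graph_scaleR[OF M] in auto)
  moreover have "L x \<le> p x" for x
    using LM dominated_linear_graph_le[OF M] by blast
  ultimately show ?thesis by blast
qed

section \<open>Generalized limits\<close>

lemma Bseq_plus:
  fixes s t :: "nat \<Rightarrow> 'a::real_normed_vector"
  assumes "Bseq s" "Bseq t"
  shows "Bseq (\<lambda>n. s n + t n)"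
proof -
  obtain K L where "\<And>n. norm (s n) \<le> K" "\<And>n. norm (t n) \<le> L"
    using assms by (meson BseqE)
  then have "norm (s n + t n) \<le> K + L" for n
    by (meson add_mono norm_triangle_le)
  then show ?thesis by (rule BseqI')
qed

lemma Bseq_cmult:
  fixes s :: "nat \<Rightarrow> 'a::real_normed_field"
  shows "Bseq s \<Longrightarrow> Bseq (\<lambda>n. c * s n)"
  using Bseq_mult[OF Bfun_const] .

lemma Bseq_minus:
  fixes s t :: "nat \<Rightarrow> real"
  shows "Bseq s \<Longrightarrow> Bseq t \<Longrightarrow> Bseq (\<lambda>n. s n - t n)"
  using Bseq_plus[of s "\<lambda>n. (-1) * t n"] Bseq_cmult[of t "-1"] by simp

text \<open>A real-valued lim sup; for unbounded sequences the values are junk.\<close>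

definition tail_sup :: "(nat \<Rightarrow> real) \<Rightarrow> nat \<Rightarrow> real" where
  "tail_sup s N = (SUP n\<in>{N..}. s n)"

definition upper_limit :: "(nat \<Rightarrow> real) \<Rightarrow> real" where
  "upper_limit s = (INF N. tail_sup s N)"

lemma tail_sup_upper: "Bseq s \<Longrightarrow> N \<le> n \<Longrightarrow> s n \<le> tail_sup s N"
  unfolding tail_sup_def
  by (rule cSUP_upper) (auto intro: bdd_above_mono[OF Bseq_bdd_above])

lemma tail_sup_least: "(\<And>n. N \<le> n \<Longrightarrow> s n \<le> a) \<Longrightarrow> tail_sup s N \<le> a"
  unfolding tail_sup_def by (rule cSUP_least) auto

lemma tail_sup_antimono: "Bseq s \<Longrightarrow> N \<le> M \<Longrightarrow> tail_sup s M \<le> tail_sup s N"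
  by (rule tail_sup_least) (auto intro: tail_sup_upper)

lemma upper_limit_le_tail_sup: "Bseq s \<Longrightarrow> upper_limit s \<le> tail_sup s N"
proof -
  assume s: "Bseq s"
  then obtain K where K: "\<And>n. norm (s n) \<le> K" by (meson BseqE)
  have "- K \<le> tail_sup s N" for N
    using tail_sup_upper[OF s, of N N] K[of N] by (simp add: abs_le_iff)
  then show ?thesis
    unfolding upper_limit_def by (intro cINF_lower) (auto simp: bdd_below_def)
qed

lemma upper_limit_greatest: "(\<And>N. a \<le> tail_sup s N) \<Longrightarrow> a \<le> upper_limit s"
  unfolding upper_limit_def by (rule cINF_greatest) auto

lemma upper_limit_le_eventually:
  assumes "Bseq s" "eventually (\<lambda>n. s n \<le> a) sequentially"
  shows "upper_limit s \<le> a"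
proof -
  obtain N where "\<And>n. N \<le> n \<Longrightarrow> s n \<le> a"
    using assms(2) unfolding eventually_sequentially by blast
  then have "tail_sup s N \<le> a" by (rule tail_sup_least)
  then show ?thesis using upper_limit_le_tail_sup[OF assms(1), of N] by simp
qed

lemma upper_limit_add:
  assumes s: "Bseq s" and t: "Bseq t"
  shows "upper_limit (\<lambda>n. s n + t n) \<le> upper_limit s + upper_limit t"
proof -
  have "upper_limit (\<lambda>n. s n + t n) \<le> tail_sup s N + tail_sup t M" for N M
  proof -
    have "upper_limit (\<lambda>n. s n + t n) \<le> tail_sup (\<lambda>n. s n + t n) (max N M)"
      by (rule upper_limit_le_tail_sup[OF Bseq_plus[OF s t]])
    also have "\<dots> \<le> tail_sup s (max N M) + tail_sup t (max N M)"
      by (rule tail_sup_least) (auto intro!: add_mono tail_sup_upper s t)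
    also have "\<dots> \<le> tail_sup s N + tail_sup t M"
      by (intro add_mono tail_sup_antimono s t) auto
    finally show ?thesis .
  qed
  then have "upper_limit (\<lambda>n. s n + t n) - tail_sup t M \<le> upper_limit s" for M
    by (intro upper_limit_greatest) (simp add: algebra_simps)
  then have "upper_limit (\<lambda>n. s n + t n) - upper_limit s \<le> upper_limit t"
    by (intro upper_limit_greatest) (simp add: algebra_simps)
  then show ?thesis by simp
qed

lemma upper_limit_cmult_le:
  assumes s: "Bseq s" and c: "c > 0"
  shows "upper_limit (\<lambda>n. c * s n) \<le> c * upper_limit s"
proof -
  have "upper_limit (\<lambda>n. c * s n) \<le> c * tail_sup s N" for N
  proof -
    have "upper_limit (\<lambda>n. c * s n) \<le> tail_sup (\<lambda>n. c * s n) N"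
      by (rule upper_limit_le_tail_sup[OF Bseq_cmult[OF s]])
    also have "\<dots> \<le> c * tail_sup s N"
      by (rule tail_sup_least) (use c tail_sup_upper[OF s] in auto)
    finally show ?thesis .
  qed
  then have "upper_limit (\<lambda>n. c * s n) / c \<le> upper_limit s"
    by (intro upper_limit_greatest) (use c in \<open>simp add: field_simps\<close>)
  then show ?thesis using c by (simp add: field_simps)
qed

lemma upper_limit_cmult:
  assumes s: "Bseq s" and c: "c > 0"
  shows "upper_limit (\<lambda>n. c * s n) = c * upper_limit s"
proof -
  have "upper_limit (\<lambda>n. (1 / c) * (c * s n)) \<le> (1 / c) * upper_limit (\<lambda>n. c * s n)"
    by (rule upper_limit_cmult_le) (use s c Bseq_cmult in auto)
  then have "c * upper_limit s \<le> upper_limit (\<lambda>n. c * s n)"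
    using c by (simp add: field_simps)
  then show ?thesis using upper_limit_cmult_le[OF s c] by simp
qed

text \<open>A Banach limit without shift invariance, constrained only on bounded sequences.\<close>

locale generalized_limit =
  fixes Blim :: "(nat \<Rightarrow> real) \<Rightarrow> real"
  assumes add: "Bseq s \<Longrightarrow> Bseq t \<Longrightarrow> Blim (\<lambda>n. s n + t n) = Blim s + Blim t"
    and cmult: "Bseq s \<Longrightarrow> Blim (\<lambda>n. c * s n) = c * Blim s"
    and le_eventually: "Bseq s \<Longrightarrow> eventually (\<lambda>n. s n \<le> a) sequentially \<Longrightarrow> Blim s \<le> a"
begin

lemma diff: "Bseq s \<Longrightarrow> Bseq t \<Longrightarrow> Blim (\<lambda>n. s n - t n) = Blim s - Blim t"
  using add[of s "\<lambda>n. (-1) * t n"] cmult[of t "-1"] Bseq_cmult[of t "-1"] by simp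

lemma ge_eventually:
  assumes "Bseq s" "eventually (\<lambda>n. a \<le> s n) sequentially"
  shows "a \<le> Blim s"
proof -
  have "eventually (\<lambda>n. (-1) * s n \<le> - a) sequentially"
    using assms(2) by (rule eventually_mono) simp
  then have "Blim (\<lambda>n. (-1) * s n) \<le> - a"
    by (rule le_eventually[OF Bseq_cmult[OF assms(1)]])
  then show ?thesis using cmult[OF assms(1), of "-1"] by simp
qed

lemma const: "Blim (\<lambda>n. c) = c"
  using le_eventually[of "\<lambda>n. c" c] ge_eventually[of "\<lambda>n. c" c] by simp

lemma add_const: "Bseq s \<Longrightarrow> Blim (\<lambda>n. s n + c) = Blim s + c"
  using add[of s "\<lambda>n. c"] const by simp

lemma mono: "Bseq s \<Longrightarrow> Bseq t \<Longrightarrow> (\<And>n. s n \<le> t n) \<Longrightarrow> Blim s \<le> Blim t"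
  using ge_eventually[of "\<lambda>n. t n - s n" 0] diff[of t s] Bseq_minus by auto

lemma le_eventually_approx:
  assumes "Bseq s" "\<And>\<delta>. \<delta> > 0 \<Longrightarrow> eventually (\<lambda>n. s n \<le> a + \<delta>) sequentially"
  shows "Blim s \<le> a"
proof (rule field_le_epsilon)
  fix \<delta> :: real assume "\<delta> > 0"
  then show "Blim s \<le> a + \<delta>" using le_eventually[OF assms(1) assms(2)] by blast
qed

lemma ge_eventually_approx:
  assumes "Bseq s" "\<And>\<delta>. \<delta> > 0 \<Longrightarrow> eventually (\<lambda>n. a - \<delta> \<le> s n) sequentially"
  shows "a \<le> Blim s"
proof -
  have "Blim (\<lambda>n. (-1) * s n) \<le> - a"
  proof (rule le_eventually_approx[OF Bseq_cmult[OF assms(1)]])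
    fix \<delta> :: real assume "\<delta> > 0"
    show "eventually (\<lambda>n. (-1) * s n \<le> - a + \<delta>) sequentially"
      using eventually_mono[OF assms(2)[OF \<open>\<delta> > 0\<close>]] by simp
  qed
  then show ?thesis using cmult[OF assms(1), of "-1"] by simp
qed

lemma abs_le_eventually_approx:
  assumes "Bseq s" "\<And>\<delta>. \<delta> > 0 \<Longrightarrow> eventually (\<lambda>n. \<bar>s n\<bar> \<le> a + \<delta>) sequentially"
  shows "\<bar>Blim s\<bar> \<le> a"
proof -
  have "Blim s \<le> a"
    by (rule le_eventually_approx[OF assms(1)]) (use eventually_mono[OF assms(2)] in simp)
  moreover have "- a \<le> Blim s"
    by (rule ge_eventually_approx[OF assms(1)]) (use eventually_mono[OF assms(2)] in simp)
  ultimately show ?thesis by linarith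
qed

end

lemma Bseq_apply_bcontfun: "Bseq (apply_bcontfun b :: nat \<Rightarrow> real)"
proof -
  obtain B where "\<And>n. norm (apply_bcontfun b n) \<le> B"
    using bounded_apply_bcontfun[of b] unfolding bounded_iff by blast
  then show ?thesis by (rule BseqI')
qed

lemma Bseq_in_bcontfun: "Bseq (s :: nat \<Rightarrow> real) \<Longrightarrow> s \<in> bcontfun"
  by (auto elim!: BseqE intro!: bcontfun_normI)

lemma generalized_limit_exists: "\<exists>Blim. generalized_limit Blim"
proof -
  define p where "p b = upper_limit (apply_bcontfun b)" for b :: "nat \<Rightarrow>\<^sub>C real"
  obtain L where L: "linear L" "\<And>b. L b \<le> p b"
  proof (atomize_elim, rule Hahn_Banach_sublinear)
    show "p (b + b') \<le> p b + p b'" for b b'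
      unfolding p_def using upper_limit_add[OF Bseq_apply_bcontfun Bseq_apply_bcontfun] by simp
    show "p (c *\<^sub>R b) = c * p b" if "c > 0" for c b
      unfolding p_def using upper_limit_cmult[OF Bseq_apply_bcontfun that] by simp
  qed
  have inv: "apply_bcontfun (Bcontfun s) = s" if "Bseq s" for s :: "nat \<Rightarrow> real"
    using Bcontfun_inverse[OF Bseq_in_bcontfun[OF that]] .
  have "generalized_limit (\<lambda>s. L (Bcontfun s))"
  proof
    fix s t :: "nat \<Rightarrow> real" and c a :: real
    assume s: "Bseq s"
    show "L (Bcontfun (\<lambda>n. s n + t n)) = L (Bcontfun s) + L (Bcontfun t)" if "Bseq t"
    proof -
      have "Bcontfun (\<lambda>n. s n + t n) = Bcontfun s + Bcontfun t"
        by (rule bcontfun_eqI) (simp add: inv s that Bseq_plus)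
      then show ?thesis using linear_add[OF L(1)] by simp
    qed
    have "Bcontfun (\<lambda>n. c * s n) = c *\<^sub>R Bcontfun s"
      by (rule bcontfun_eqI) (simp add: inv s Bseq_cmult)
    then show "L (Bcontfun (\<lambda>n. c * s n)) = c * L (Bcontfun s)"
      using linear_scale[OF L(1)] by simp
    show "L (Bcontfun s) \<le> a" if "eventually (\<lambda>n. s n \<le> a) sequentially"
      using L(2)[of "Bcontfun s"] upper_limit_le_eventually[OF s that]
      unfolding p_def inv[OF s] by linarith
  qed
  then show ?thesis by blast
qed

section \<open>One-sided derivatives of the norm\<close>

text \<open>The map \<open>t \<mapsto> \<parallel>t u + w\<parallel> - t \<parallel>u\<parallel>\<close> is non-increasing on \<open>t > 0\<close>; substituting \<open>t = 1/s\<close>,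
  its infimum is the one-sided derivative of the norm at \<open>u\<close> in direction \<open>w\<close>.\<close>

definition norm_dir_deriv :: "'a::real_normed_vector \<Rightarrow> 'a \<Rightarrow> real" where
  "norm_dir_deriv u w = Inf {norm (t *\<^sub>R u + w) - t * norm u | t. t > 0}"

text \<open>By convexity of the norm the sum below is always non-negative, so this says that the
  norm is differentiable at \<open>u\<close> along \<open>w\<close>.\<close>

definition norm_smooth_along :: "'a::real_normed_vector \<Rightarrow> 'a \<Rightarrow> bool" where
  "norm_smooth_along u w \<longleftrightarrow> norm_dir_deriv u w + norm_dir_deriv u (- w) \<le> 0"

lemma norm_scaleR_add_minus_ge: "t \<ge> 0 \<Longrightarrow> - norm w \<le> norm (t *\<^sub>R u + w) - t * norm u"
  using norm_triangle_ineq2[of "t *\<^sub>R u" "- w"] by (simp add: abs_le_iff)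

lemma norm_scaleR_add_minus_antimono:
  assumes "0 \<le> t" "t \<le> t'"
  shows "norm (t' *\<^sub>R u + w) - t' * norm u \<le> norm (t *\<^sub>R u + w) - t * norm u"
proof -
  have "norm (t' *\<^sub>R u + w) = norm ((t *\<^sub>R u + w) + (t' - t) *\<^sub>R u)"
    by (simp add: algebra_simps)
  also have "\<dots> \<le> norm (t *\<^sub>R u + w) + (t' - t) * norm u"
    using norm_triangle_ineq[of "t *\<^sub>R u + w" "(t' - t) *\<^sub>R u"] assms by simp
  finally show ?thesis by (simp add: algebra_simps)
qed

lemma norm_dir_deriv_le:
  assumes "t > 0"
  shows "norm_dir_deriv u w \<le> norm (t *\<^sub>R u + w) - t * norm u"
proof -
  have "bdd_below {norm (t *\<^sub>R u + w) - t * norm u | t. t > 0}"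
    by (rule bdd_belowI[of _ "- norm w"]) (auto intro: norm_scaleR_add_minus_ge)
  then show ?thesis
    unfolding norm_dir_deriv_def using assms by (auto intro: cInf_lower)
qed

lemma norm_dir_deriv_greatest:
  "(\<And>t. t > 0 \<Longrightarrow> a \<le> norm (t *\<^sub>R u + w) - t * norm u) \<Longrightarrow> a \<le> norm_dir_deriv u w"
  unfolding norm_dir_deriv_def by (rule cInf_greatest) (auto intro: exI[of _ 1])

lemma norm_dir_deriv_at_top:
  assumes c: "c > 0" and \<delta>: "\<delta> > 0"
  shows "\<forall>\<^sub>F t in at_top. norm (c *\<^sub>R w + t *\<^sub>R u) - t * norm u \<le> c * norm_dir_deriv u w + \<delta>"
proof -
  obtain t0 where t0: "t0 > 0" "norm (t0 *\<^sub>R u + w) - t0 * norm u < norm_dir_deriv u w + \<delta> / c"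
    using norm_dir_deriv_greatest[of "norm_dir_deriv u w + \<delta> / c" u w] c \<delta>
    by (metis divide_pos_pos less_add_same_cancel1 not_le)
  have "norm (c *\<^sub>R w + t *\<^sub>R u) - t * norm u \<le> c * norm_dir_deriv u w + \<delta>" if t: "t \<ge> c * t0" for t
  proof -
    have "c *\<^sub>R w + t *\<^sub>R u = c *\<^sub>R ((t / c) *\<^sub>R u + w)"
      using c by (simp add: algebra_simps)
    then have "norm (c *\<^sub>R w + t *\<^sub>R u) = c * norm ((t / c) *\<^sub>R u + w)"
      using c by simp
    then have "norm (c *\<^sub>R w + t *\<^sub>R u) - t * norm u = c * (norm ((t / c) *\<^sub>R u + w) - (t / c) * norm u)"
      using c by (simp add: algebra_simps)
    also have "\<dots> \<le> c * (norm (t0 *\<^sub>R u + w) - t0 * norm u)"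
      using c t t0 by (intro mult_left_mono norm_scaleR_add_minus_antimono) (auto simp: field_simps)
    also have "\<dots> \<le> c * norm_dir_deriv u w + \<delta>"
      using c t0 by (simp add: field_simps)
    finally show ?thesis .
  qed
  then show ?thesis
    unfolding eventually_at_top_linorder by blast
qed

lemma norm_dir_deriv_chord:
  assumes "s < s'"
  shows "norm_dir_deriv (v + s *\<^sub>R y) y + norm_dir_deriv (v + s' *\<^sub>R y) (- y) \<le> 0"
proof -
  define t where "t = 1 / (s' - s)"
  have t: "t > 0" unfolding t_def using assms by simp
  have ts: "t * s + 1 = t * s'" "t * s' - 1 = t * s"
    unfolding t_def using assms by (simp_all add: field_simps)
  have "t *\<^sub>R (v + s *\<^sub>R y) + y = t *\<^sub>R v + (t * s + 1) *\<^sub>R y"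
    and "t *\<^sub>R (v + s' *\<^sub>R y) + - y = t *\<^sub>R v + (t * s' - 1) *\<^sub>R y"
    by (simp_all add: algebra_simps)
  then have "t *\<^sub>R (v + s *\<^sub>R y) + y = t *\<^sub>R (v + s' *\<^sub>R y)"
    and "t *\<^sub>R (v + s' *\<^sub>R y) + - y = t *\<^sub>R (v + s *\<^sub>R y)"
    unfolding ts by (simp_all add: algebra_simps)
  then show ?thesis
    using norm_dir_deriv_le[OF t, of "v + s *\<^sub>R y" y] norm_dir_deriv_le[OF t, of "v + s' *\<^sub>R y" "- y"] t
    by simp
qed

text \<open>Otherwise \<open>s \<mapsto>\<close> a rational strictly between the two one-sided derivatives at \<open>v + s y\<close>
  would be strictly increasing on an interval, injecting it into \<open>\<rat>\<close>.\<close>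

lemma norm_smooth_along_dense:
  assumes "\<delta> > 0"
  shows "\<exists>s. \<bar>s\<bar> < \<delta> \<and> norm_smooth_along (v + s *\<^sub>R y) y"
proof (rule ccontr)
  define I where "I = {-\<delta><..<\<delta>}"
  define D where "D s = norm_dir_deriv (v + s *\<^sub>R y) y" for s
  define D' where "D' s = - norm_dir_deriv (v + s *\<^sub>R y) (- y)" for s
  assume "\<not> ?thesis"
  then have "\<not> norm_smooth_along (v + s *\<^sub>R y) y" if "s \<in> I" for s
    using that unfolding I_def by force
  then have "D' s < D s" if "s \<in> I" for s
    using that unfolding D_def D'_def norm_smooth_along_def by force
  then have "\<forall>s\<in>I. \<exists>r. r \<in> \<rat> \<and> D' s < r \<and> r < D s"
    using Rats_dense_in_real by blast
  then obtain q where q: "\<And>s. s \<in> I \<Longrightarrow> q s \<in> \<rat> \<and> D' s < q s \<and> q s < D s"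
    by (auto dest!: bchoice)
  have strict_mono: "q s < q s'" if "s \<in> I" "s' \<in> I" "s < s'" for s s'
    using q[OF that(1)] q[OF that(2)] norm_dir_deriv_chord[OF that(3), of v y]
    unfolding D_def D'_def by linarith
  have "inj_on q I"
  proof (rule inj_onI)
    fix s s' assume "s \<in> I" "s' \<in> I" "q s = q s'"
    then show "s = s'"
      using strict_mono[of s s'] strict_mono[of s' s] by (cases s s' rule: linorder_cases) auto
  qed
  moreover have "q ` I \<subseteq> \<rat>"
    using q by blast
  then have "countable (q ` I)"
    using countable_rat countable_subset by blast
  ultimately have "countable I"
    using countable_image_inj_on by blast
  then show False
    using uncountable_open_interval[of "-\<delta>" \<delta>] assms unfolding I_def by simp
qed

section \<open>A sandwich theorem\<close>

lemma lipschitz_on_le_add_norm: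
  fixes k :: "'a::real_normed_vector \<Rightarrow> real"
  shows "1-lipschitz_on UNIV k \<Longrightarrow> k q \<le> k r + norm (q - r)"
  using lipschitz_onD[of 1 UNIV k q r] by (simp add: dist_real_def dist_norm)

context
  fixes k m :: "'a::real_normed_vector \<Rightarrow> real"
  assumes k_convex: "convex_on UNIV k" and m_convex: "convex_on UNIV m"
    and k_lipschitz: "1-lipschitz_on UNIV k"
    and k_plus_m_nonneg: "\<And>q. 0 \<le> k q + m q"
begin

text \<open>The largest positively homogeneous minorant of the infimal convolution of \<open>k\<close> and
  \<open>m \<circ> uminus\<close>.\<close>

definition sandwich_gauge :: "'a \<Rightarrow> real" where
  "sandwich_gauge y = Inf {(k (l *\<^sub>R y + z) + m z) / l | l z. l > 0}"

lemma sandwich_gauge_le: "l > 0 \<Longrightarrow> sandwich_gauge y \<le> (k (l *\<^sub>R y + z) + m z) / l"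
proof -
  assume l: "l > 0"
  have "- norm y \<le> (k (l' *\<^sub>R y + z') + m z') / l'" if "l' > 0" for l' z'
  proof -
    have "k z' \<le> k (l' *\<^sub>R y + z') + l' * norm y"
      using lipschitz_on_le_add_norm[OF k_lipschitz, of z' "l' *\<^sub>R y + z'"] that by simp
    then have "- (l' * norm y) \<le> k (l' *\<^sub>R y + z') + m z'"
      using k_plus_m_nonneg[of z'] by linarith
    then show ?thesis using that by (simp add: field_simps)
  qed
  then have "bdd_below {(k (l *\<^sub>R y + z) + m z) / l | l z. l > 0}"
    by (intro bdd_belowI[of _ "- norm y"]) blast
  then show ?thesis
    unfolding sandwich_gauge_def using l by (auto intro: cInf_lower)
qed

lemma sandwich_gauge_greatest:
  "(\<And>l z. l > 0 \<Longrightarrow> a \<le> (k (l *\<^sub>R y + z) + m z) / l) \<Longrightarrow> a \<le> sandwich_gauge y"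
  unfolding sandwich_gauge_def by (rule cInf_greatest) (blast intro: zero_less_one)+

text \<open>The convex combination of the two witnesses with weights \<open>l2 / (l1 + l2)\<close> and
  \<open>l1 / (l1 + l2)\<close> is a witness for \<open>x + y\<close> at scale \<open>l1 l2 / (l1 + l2)\<close>.\<close>

lemma sandwich_gauge_add_le:
  assumes l: "l1 > 0" "l2 > 0"
  shows "sandwich_gauge (x + y) \<le> (k (l1 *\<^sub>R x + z1) + m z1) / l1 + (k (l2 *\<^sub>R y + z2) + m z2) / l2"
proof -
  define t where "t = l1 / (l1 + l2)"
  define l where "l = l1 * l2 / (l1 + l2)"
  have t: "0 \<le> t" "t \<le> 1" and lpos: "l > 0"
    unfolding t_def l_def using l by auto
  have "0 < l1 * (l1 * l2) + l1 * (l2 * l2)"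
    using l by (intro add_pos_pos mult_pos_pos)
  have tl: "(1 - t) * l1 = l" "t * l2 = l" "(1 - t) / l = 1 / l1" "t / l = 1 / l2"
    unfolding t_def l_def using l \<open>0 < l1 * (l1 * l2) + l1 * (l2 * l2)\<close>
    by (auto simp: field_simps)
  have "(1 - t) *\<^sub>R (l1 *\<^sub>R x + z1) + t *\<^sub>R (l2 *\<^sub>R y + z2)
      = ((1 - t) * l1) *\<^sub>R x + (t * l2) *\<^sub>R y + ((1 - t) *\<^sub>R z1 + t *\<^sub>R z2)"
    by (simp add: algebra_simps)
  then have pt: "l *\<^sub>R (x + y) + ((1 - t) *\<^sub>R z1 + t *\<^sub>R z2)
      = (1 - t) *\<^sub>R (l1 *\<^sub>R x + z1) + t *\<^sub>R (l2 *\<^sub>R y + z2)"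
    unfolding tl(1,2) by (simp add: algebra_simps)
  have "sandwich_gauge (x + y) \<le> (k (l *\<^sub>R (x + y) + ((1 - t) *\<^sub>R z1 + t *\<^sub>R z2)) + m ((1 - t) *\<^sub>R z1 + t *\<^sub>R z2)) / l"
    by (rule sandwich_gauge_le[OF lpos])
  also have "\<dots> \<le> ((1 - t) * (k (l1 *\<^sub>R x + z1) + m z1) + t * (k (l2 *\<^sub>R y + z2) + m z2)) / l"
  proof -
    have "k ((1 - t) *\<^sub>R (l1 *\<^sub>R x + z1) + t *\<^sub>R (l2 *\<^sub>R y + z2))
        \<le> (1 - t) * k (l1 *\<^sub>R x + z1) + t * k (l2 *\<^sub>R y + z2)"
      and "m ((1 - t) *\<^sub>R z1 + t *\<^sub>R z2) \<le> (1 - t) * m z1 + t * m z2"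
      using convex_onD[OF k_convex t] convex_onD[OF m_convex t] by simp_all
    then show ?thesis
      unfolding pt using lpos by (intro divide_right_mono) (auto simp: algebra_simps)
  qed
  also have "\<dots> = (1 - t) / l * (k (l1 *\<^sub>R x + z1) + m z1) + t / l * (k (l2 *\<^sub>R y + z2) + m z2)"
    by (simp add: add_divide_distrib)
  also have "\<dots> = (k (l1 *\<^sub>R x + z1) + m z1) / l1 + (k (l2 *\<^sub>R y + z2) + m z2) / l2"
    unfolding tl(3,4) by simp
  finally show ?thesis .
qed

lemma sandwich_gauge_add: "sandwich_gauge (x + y) \<le> sandwich_gauge x + sandwich_gauge y"
proof -
  have "sandwich_gauge (x + y) - (k (l2 *\<^sub>R y + z2) + m z2) / l2 \<le> sandwich_gauge x"
    if "l2 > 0" for l2 z2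
    using sandwich_gauge_add_le[OF _ that] by (intro sandwich_gauge_greatest) (simp add: algebra_simps)
  then have "sandwich_gauge (x + y) - sandwich_gauge x \<le> sandwich_gauge y"
    by (intro sandwich_gauge_greatest) (simp add: algebra_simps)
  then show ?thesis by simp
qed

lemma sandwich_gauge_scaleR:
  assumes c: "c > 0"
  shows "sandwich_gauge (c *\<^sub>R x) = c * sandwich_gauge x"
proof (rule antisym)
  have "sandwich_gauge (c *\<^sub>R x) / c \<le> sandwich_gauge x"
  proof (rule sandwich_gauge_greatest)
    fix l z assume l: "(l::real) > 0"
    have "sandwich_gauge (c *\<^sub>R x) \<le> (k ((l / c) *\<^sub>R (c *\<^sub>R x) + z) + m z) / (l / c)"
      using c l by (intro sandwich_gauge_le) simp
    then show "sandwich_gauge (c *\<^sub>R x) / c \<le> (k (l *\<^sub>R x + z) + m z) / l"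
      using c l by (simp add: field_simps)
  qed
  then show "sandwich_gauge (c *\<^sub>R x) \<le> c * sandwich_gauge x"
    using c by (simp add: field_simps)
next
  show "c * sandwich_gauge x \<le> sandwich_gauge (c *\<^sub>R x)"
  proof (rule sandwich_gauge_greatest)
    fix l z assume l: "(l::real) > 0"
    have "sandwich_gauge x \<le> (k ((l * c) *\<^sub>R x + z) + m z) / (l * c)"
      using c l by (intro sandwich_gauge_le) simp
    then show "c * sandwich_gauge x \<le> (k (l *\<^sub>R (c *\<^sub>R x) + z) + m z) / l"
      using c l by (simp add: field_simps)
  qed
qed

lemma sandwich_gauge_le_norm: "sandwich_gauge y \<le> norm y"
proof (rule field_le_epsilon)
  fix e :: real assume e: "e > 0"
  define l where "l = (k 0 + m 0 + 1) / e"
  have l: "l > 0" unfolding l_def using e k_plus_m_nonneg[of 0] by simp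
  have "sandwich_gauge y \<le> (k (l *\<^sub>R y + 0) + m 0) / l"
    by (rule sandwich_gauge_le[OF l])
  also have "\<dots> \<le> (k 0 + l * norm y + m 0) / l"
    using lipschitz_on_le_add_norm[OF k_lipschitz, of "l *\<^sub>R y" 0] l by (intro divide_right_mono) auto
  also have "\<dots> = norm y + (k 0 + m 0) / l"
    using l by (simp add: field_simps)
  also have "(k 0 + m 0) / l \<le> e"
    unfolding l_def using e k_plus_m_nonneg[of 0] by (simp add: field_simps)
  finally show "sandwich_gauge y \<le> norm y + e" by simp
qed

theorem linear_sandwich:
  "\<exists>\<phi> c. linear \<phi> \<and> (\<forall>y. \<phi> y \<le> norm y) \<and> (\<forall>q. - m q \<le> \<phi> q + c \<and> \<phi> q + c \<le> k q)"
proof -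
  obtain \<phi> where \<phi>: "linear \<phi>" "\<And>y. \<phi> y \<le> sandwich_gauge y"
    using Hahn_Banach_sublinear[OF sandwich_gauge_add sandwich_gauge_scaleR] by blast
  have gap: "- m q' - \<phi> q' \<le> k q - \<phi> q" for q q'
  proof -
    have "\<phi> q - \<phi> q' = \<phi> (q - q')" using linear_diff[OF \<phi>(1)] by simp
    also have "\<dots> \<le> sandwich_gauge (q - q')" by (rule \<phi>(2))
    also have "\<dots> \<le> k q + m q'"
      using sandwich_gauge_le[of 1 "q - q'" q'] by simp
    finally show ?thesis by simp
  qed
  define c where "c = (SUP q'. - m q' - \<phi> q')"
  have "- m q' - \<phi> q' \<le> c" for q'
    unfolding c_def by (rule cSUP_upper) (use gap[of _ 0] in \<open>auto simp: bdd_above_def\<close>)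
  moreover have "c \<le> k q - \<phi> q" for q
    unfolding c_def by (rule cSUP_least) (use gap in auto)
  ultimately show ?thesis
    using \<phi>(1) \<phi>(2) sandwich_gauge_le_norm by (smt (verit))
qed

end

section \<open>Horofunctions of \<open>\<epsilon>\<close>-isometries\<close>

lemma eps_isometryD: "eps_isometry \<epsilon> f \<Longrightarrow> \<bar>norm (f a - f b) - norm (a - b)\<bar> \<le> \<epsilon>"
  unfolding eps_isometry_def by blast

lemma eps_isometry_nonneg: "eps_isometry \<epsilon> f \<Longrightarrow> 0 \<le> \<epsilon>"
  using eps_isometryD[of \<epsilon> f 0 0] by simp

lemma eps_isometry_le: "eps_isometry \<epsilon> f \<Longrightarrow> norm (f a - f b) \<le> norm (a - b) + \<epsilon>"
  using eps_isometryD[of \<epsilon> f a b] by (simp add: abs_le_iff)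

lemma eps_isometry_ge: "eps_isometry \<epsilon> f \<Longrightarrow> norm (a - b) - \<epsilon> \<le> norm (f a - f b)"
  using eps_isometryD[of \<epsilon> f a b] by (simp add: abs_le_iff)

lemma Bseq_norm_diff_recentre:
  fixes P :: "nat \<Rightarrow> 'a::real_normed_vector"
  assumes "Bseq (\<lambda>N. norm (P N - z) - r N)"
  shows "Bseq (\<lambda>N. norm (q - P N) - r N)"
proof -
  obtain K where K: "\<And>N. norm (norm (P N - z) - r N) \<le> K"
    using assms by (meson BseqE)
  have "\<bar>norm (q - P N) - r N\<bar> \<le> K + norm (q - z)" for N
  proof -
    have "\<bar>norm (q - P N) - norm (P N - z)\<bar> \<le> norm (q - z)"
      using norm_triangle_ineq3[of "q - P N" "z - P N"] by (simp add: norm_minus_commute)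
    then show ?thesis using K[of N] by simp
  qed
  then show ?thesis by (intro BseqI'[of _ "K + norm (q - z)"]) simp
qed

context generalized_limit
begin

definition horofunction :: "(nat \<Rightarrow> 'a::real_normed_vector) \<Rightarrow> (nat \<Rightarrow> real) \<Rightarrow> 'a \<Rightarrow> real" where
  "horofunction P r q = Blim (\<lambda>N. norm (q - P N) - r N)"

lemma horofunction_convex:
  assumes P: "Bseq (\<lambda>N. norm (P N - z) - r N)"
  shows "convex_on UNIV (horofunction P r)"
proof (rule convex_onI)
  fix t :: real and q q' assume t: "0 < t" "t < 1"
  have pointwise: "norm (((1 - t) *\<^sub>R q + t *\<^sub>R q') - P N) - r N
      \<le> (1 - t) * (norm (q - P N) - r N) + t * (norm (q' - P N) - r N)" for N
  proof -
    have "((1 - t) *\<^sub>R q + t *\<^sub>R q') - P N = (1 - t) *\<^sub>R (q - P N) + t *\<^sub>R (q' - P N)"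
      by (simp add: algebra_simps)
    then have "norm (((1 - t) *\<^sub>R q + t *\<^sub>R q') - P N) \<le> (1 - t) * norm (q - P N) + t * norm (q' - P N)"
      using norm_triangle_ineq[of "(1 - t) *\<^sub>R (q - P N)" "t *\<^sub>R (q' - P N)"] t by simp
    then show ?thesis by (simp add: algebra_simps)
  qed
  define s where "s q N = norm (q - P N) - r N" for q N
  have bs: "Bseq (s q)" for q
    unfolding s_def by (rule Bseq_norm_diff_recentre[OF P])
  have "horofunction P r ((1 - t) *\<^sub>R q + t *\<^sub>R q') \<le> Blim (\<lambda>N. (1 - t) * s q N + t * s q' N)"
    unfolding horofunction_def
  proof (rule mono[OF Bseq_norm_diff_recentre[OF P]])
    show "Bseq (\<lambda>N. (1 - t) * s q N + t * s q' N)"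
      using bs by (intro Bseq_plus Bseq_cmult)
  qed (use pointwise in \<open>simp add: s_def\<close>)
  also have "\<dots> = (1 - t) * horofunction P r q + t * horofunction P r q'"
    unfolding horofunction_def s_def[symmetric]
    using add[OF Bseq_cmult[OF bs] Bseq_cmult[OF bs]] cmult[OF bs] by simp
  finally show "horofunction P r ((1 - t) *\<^sub>R q + t *\<^sub>R q') \<le> (1 - t) * horofunction P r q + t * horofunction P r q'" .
qed simp

lemma horofunction_le_add_norm:
  assumes P: "Bseq (\<lambda>N. norm (P N - z) - r N)"
  shows "horofunction P r q \<le> horofunction P r q' + norm (q - q')"
proof -
  have "norm (q - P N) \<le> norm (q - q') + norm (q' - P N)" for N
    by (rule norm_diff_triangle_le) auto
  then have "horofunction P r q \<le> Blim (\<lambda>N. (norm (q' - P N) - r N) + norm (q - q'))"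
    unfolding horofunction_def
    by (intro mono Bseq_add Bseq_norm_diff_recentre[OF P]) (simp add: add.commute)
  then show ?thesis
    unfolding horofunction_def using add_const Bseq_norm_diff_recentre[OF P] by simp
qed

lemma horofunction_lipschitz:
  assumes "Bseq (\<lambda>N. norm (P N - z) - r N)"
  shows "1-lipschitz_on UNIV (horofunction P r)"
proof (rule lipschitz_onI)
  fix q q' :: 'a
  show "dist (horofunction P r q) (horofunction P r q') \<le> 1 * dist q q'"
    using horofunction_le_add_norm[OF assms, of q q'] horofunction_le_add_norm[OF assms, of q' q]
    by (simp add: dist_real_def dist_norm abs_le_iff norm_minus_commute)
qed simp

lemma horofunction_opposite_sum:
  assumes P: "Bseq (\<lambda>N. norm (P N - z) - r N)" and Q: "Bseq (\<lambda>N. norm (Q N - z) - r N)"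
    and far: "\<And>N. 2 * r N - \<epsilon> \<le> norm (P N - Q N)"
  shows "- \<epsilon> \<le> horofunction P r q + horofunction Q r q"
proof -
  have "- \<epsilon> \<le> Blim (\<lambda>N. (norm (q - P N) - r N) + (norm (q - Q N) - r N))"
  proof (rule ge_eventually)
    show "Bseq (\<lambda>N. (norm (q - P N) - r N) + (norm (q - Q N) - r N))"
      by (intro Bseq_plus Bseq_norm_diff_recentre[OF P] Bseq_norm_diff_recentre[OF Q])
    have tri: "norm (P N - Q N) \<le> norm (q - P N) + norm (q - Q N)" for N
      using norm_triangle_ineq4[of "P N - q" "Q N - q"] by (simp add: norm_minus_commute)
    have "- \<epsilon> \<le> (norm (q - P N) - r N) + (norm (q - Q N) - r N)" for N
      using far[of N] tri[of N] by linarith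
    then show "\<forall>\<^sub>F N in sequentially. - \<epsilon> \<le> (norm (q - P N) - r N) + (norm (q - Q N) - r N)"
      by simp
  qed
  then show ?thesis
    unfolding horofunction_def
    using add[OF Bseq_norm_diff_recentre[OF P] Bseq_norm_diff_recentre[OF Q]] by simp
qed

lemma horofunction_image_le:
  assumes f: "eps_isometry \<epsilon> f" and P: "Bseq (\<lambda>N. norm (f (p N) - z) - r N)"
    and near: "\<And>\<delta>. \<delta> > 0 \<Longrightarrow> \<forall>\<^sub>F N in sequentially. norm (a - p N) - r N \<le> b + \<delta>"
  shows "horofunction (\<lambda>N. f (p N)) r (f a) \<le> b + \<epsilon>"
  unfolding horofunction_def
proof (rule le_eventually_approx[OF Bseq_norm_diff_recentre[OF P]])
  fix \<delta> :: real assume "\<delta> > 0"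
  have "norm (f a - f (p N)) - r N \<le> b + \<epsilon> + \<delta>" if "norm (a - p N) - r N \<le> b + \<delta>" for N
    using eps_isometry_le[OF f, of a "p N"] that by linarith
  then show "\<forall>\<^sub>F N in sequentially. norm (f a - f (p N)) - r N \<le> b + \<epsilon> + \<delta>"
    by (rule eventually_mono[OF near[OF \<open>\<delta> > 0\<close>], rotated])
qed

end

section \<open>The limit map\<close>

lemma Bseq_eps_isometry_ray:
  assumes f: "eps_isometry \<epsilon> f"
  shows "Bseq (\<lambda>N. norm (f (real N *\<^sub>R v) - f 0) - real N * norm v)"
proof (rule BseqI'[of _ \<epsilon>])
  fix N :: nat
  show "norm (norm (f (real N *\<^sub>R v) - f 0) - real N * norm v) \<le> \<epsilon>"
    using eps_isometryD[OF f, of "real N *\<^sub>R v" 0] by simp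
qed

text \<open>At \<open>n = 0\<close> the value is \<open>0\<close>, by division by zero.\<close>

definition rescaled_difference ::
    "('a::real_normed_vector \<Rightarrow> 'b::real_normed_vector) \<Rightarrow> ('b \<Rightarrow>\<^sub>L real) \<Rightarrow> 'a \<Rightarrow> 'a \<Rightarrow> nat \<Rightarrow> real" where
  "rescaled_difference f \<phi> x y n = \<phi> (f (real n *\<^sub>R x) - f (real n *\<^sub>R y)) / real n"

lemma rescaled_difference_abs_le:
  assumes f: "eps_isometry \<epsilon> f"
  shows "\<bar>rescaled_difference f \<phi> x y n\<bar> \<le> norm \<phi> * norm (x - y) + norm \<phi> * \<epsilon> / real n"
proof (cases "n = 0")
  case True
  then show ?thesis by (simp add: rescaled_difference_def)
next
  case False
  have "\<bar>\<phi> (f (real n *\<^sub>R x) - f (real n *\<^sub>R y))\<bar> \<le> norm \<phi> * norm (f (real n *\<^sub>R x) - f (real n *\<^sub>R y))"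
    using norm_blinfun[of \<phi>] by simp
  also have "\<dots> \<le> norm \<phi> * (real n * norm (x - y) + \<epsilon>)"
    using eps_isometry_le[OF f, of "real n *\<^sub>R x" "real n *\<^sub>R y"]
    by (intro mult_left_mono) (simp_all flip: scaleR_diff_right)
  finally have "\<bar>rescaled_difference f \<phi> x y n\<bar> \<le> norm \<phi> * (real n * norm (x - y) + \<epsilon>) / real n"
    unfolding rescaled_difference_def by (simp add: divide_right_mono)
  also have "\<dots> = norm \<phi> * norm (x - y) + norm \<phi> * \<epsilon> / real n"
    using False by (simp add: field_simps)
  finally show ?thesis .
qed

lemma Bseq_rescaled_difference:
  assumes f: "eps_isometry \<epsilon> f"
  shows "Bseq (rescaled_difference f \<phi> x y)"
proof (rule BseqI')
  fix n
  have "norm \<phi> * \<epsilon> / real n \<le> norm \<phi> * \<epsilon>"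
    using eps_isometry_nonneg[OF f] by (cases n) (simp_all add: field_simps)
  then show "norm (rescaled_difference f \<phi> x y n) \<le> norm \<phi> * norm (x - y) + norm \<phi> * \<epsilon>"
    using rescaled_difference_abs_le[OF f, of \<phi> x y n] by simp
qed

lemma rescaled_difference_eventually_le:
  assumes f: "eps_isometry \<epsilon> f" and \<delta>: "\<delta> > 0"
  shows "\<forall>\<^sub>F n in sequentially. \<bar>rescaled_difference f \<phi> x y n\<bar> \<le> norm \<phi> * norm (x - y) + \<delta>"
proof -
  have small: "\<forall>\<^sub>F n in sequentially. norm \<phi> * \<epsilon> / real n < \<delta>"
    using order_tendstoD(2)[OF lim_const_over_n \<delta>] by simp
  have "\<bar>rescaled_difference f \<phi> x y n\<bar> \<le> norm \<phi> * norm (x - y) + \<delta>"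
    if "norm \<phi> * \<epsilon> / real n < \<delta>" for n
    using rescaled_difference_abs_le[OF f, of \<phi> x y n] that by linarith
  then show ?thesis
    by (rule eventually_mono[OF small])
qed

text \<open>A substitute, via a generalized limit, for a weak* limit of \<open>(f (n x) - f 0) / n\<close> in the bidual.\<close>

definition limit_map ::
    "((nat \<Rightarrow> real) \<Rightarrow> real) \<Rightarrow> ('a::real_normed_vector \<Rightarrow> 'b::real_normed_vector) \<Rightarrow> 'a \<Rightarrow> ('b \<Rightarrow>\<^sub>L real) \<Rightarrow>\<^sub>L real" where
  "limit_map Blim f x = Blinfun (\<lambda>\<phi>. Blim (rescaled_difference f \<phi> x 0))"

context generalized_limit
begin

lemma limit_map_apply:
  assumes f: "eps_isometry \<epsilon> f"
  shows "blinfun_apply (limit_map Blim f x) \<phi> = Blim (rescaled_difference f \<phi> x 0)"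
proof -
  note bs = Bseq_rescaled_difference[OF f]
  have "bounded_linear (\<lambda>\<phi>. Blim (rescaled_difference f \<phi> x 0))"
  proof (rule bounded_linear_intro[where K = "norm x"])
    fix \<phi> \<psi> :: "'b \<Rightarrow>\<^sub>L real" and c :: real
    have "rescaled_difference f (\<phi> + \<psi>) x 0 = (\<lambda>n. rescaled_difference f \<phi> x 0 n + rescaled_difference f \<psi> x 0 n)"
      by (rule ext) (simp add: rescaled_difference_def plus_blinfun.rep_eq add_divide_distrib)
    then show "Blim (rescaled_difference f (\<phi> + \<psi>) x 0) = Blim (rescaled_difference f \<phi> x 0) + Blim (rescaled_difference f \<psi> x 0)"
      using add[OF bs bs] by simp
    have "rescaled_difference f (c *\<^sub>R \<phi>) x 0 = (\<lambda>n. c * rescaled_difference f \<phi> x 0 n)"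
      by (rule ext) (simp add: rescaled_difference_def scaleR_blinfun.rep_eq)
    then show "Blim (rescaled_difference f (c *\<^sub>R \<phi>) x 0) = c *\<^sub>R Blim (rescaled_difference f \<phi> x 0)"
      using cmult[OF bs] by simp
    have "\<bar>Blim (rescaled_difference f \<phi> x 0)\<bar> \<le> norm \<phi> * norm (x - 0)"
      by (rule abs_le_eventually_approx[OF bs rescaled_difference_eventually_le[OF f]])
    then show "norm (Blim (rescaled_difference f \<phi> x 0)) \<le> norm \<phi> * norm x"
      by simp
  qed
  then show ?thesis
    unfolding limit_map_def by (simp add: bounded_linear_Blinfun_apply)
qed

lemma limit_map_diff_apply:
  assumes f: "eps_isometry \<epsilon> f"
  shows "blinfun_apply (limit_map Blim f x - limit_map Blim f y) \<phi> = Blim (rescaled_difference f \<phi> x y)"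
proof -
  have "rescaled_difference f \<phi> x y = (\<lambda>n. rescaled_difference f \<phi> x 0 n - rescaled_difference f \<phi> y 0 n)"
    by (rule ext) (simp add: rescaled_difference_def blinfun.diff_right diff_divide_distrib)
  then show ?thesis
    using diff[OF Bseq_rescaled_difference[OF f] Bseq_rescaled_difference[OF f]]
    by (simp add: minus_blinfun.rep_eq limit_map_apply[OF f])
qed

lemma norm_limit_map_diff_le:
  assumes f: "eps_isometry \<epsilon> f"
  shows "norm (limit_map Blim f x - limit_map Blim f y) \<le> norm (x - y)"
proof (rule norm_blinfun_bound)
  fix \<phi> :: "'b \<Rightarrow>\<^sub>L real"
  have "\<bar>Blim (rescaled_difference f \<phi> x y)\<bar> \<le> norm \<phi> * norm (x - y)"
    by (rule abs_le_eventually_approx[OF Bseq_rescaled_difference[OF f] rescaled_difference_eventually_le[OF f]])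
  then show "norm (blinfun_apply (limit_map Blim f x - limit_map Blim f y) \<phi>) \<le> norm (x - y) * norm \<phi>"
    by (simp add: limit_map_diff_apply[OF f] mult.commute)
qed simp

lemma horofunction_ray_le:
  assumes f: "eps_isometry \<epsilon> f" and n: "n > 0"
  shows "horofunction (\<lambda>N. f (real N *\<^sub>R - u)) (\<lambda>N. real N * norm u) (f (real n *\<^sub>R y))
    \<le> real n * norm_dir_deriv u y + \<epsilon>"
proof (rule horofunction_image_le[OF f])
  show "Bseq (\<lambda>N. norm (f (real N *\<^sub>R - u) - f 0) - real N * norm u)"
    using Bseq_eps_isometry_ray[OF f, of "- u"] by simp
  fix \<delta> :: real assume \<delta>: "\<delta> > 0"
  have "real n > 0" using n by simp
  from eventually_compose_filterlim[OF norm_dir_deriv_at_top[OF this \<delta>] filterlim_real_sequentially]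
  have "\<forall>\<^sub>F N in sequentially. norm (real n *\<^sub>R y + real N *\<^sub>R u) - real N * norm u \<le> real n * norm_dir_deriv u y + \<delta>" .
  then show "\<forall>\<^sub>F N in sequentially. norm (real n *\<^sub>R y - real N *\<^sub>R - u) - real N * norm u \<le> real n * norm_dir_deriv u y + \<delta>"
    by simp
qed

lemma horofunction_opposite_ray_le:
  assumes f: "eps_isometry \<epsilon> f" and n: "n > 0"
  shows "horofunction (\<lambda>N. f (real N *\<^sub>R u)) (\<lambda>N. real N * norm u) (f (real n *\<^sub>R (y + u)))
    \<le> real n * norm_dir_deriv u (- y) - real n * norm u + \<epsilon>"
proof (rule horofunction_image_le[OF f Bseq_eps_isometry_ray[OF f]])
  fix \<delta> :: real assume \<delta>: "\<delta> > 0"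
  have rn: "real n > 0" using n by simp
  have "filterlim (\<lambda>N. - real n + real N) at_top sequentially"
    by (rule filterlim_tendsto_add_at_top[OF tendsto_const filterlim_real_sequentially])
  from eventually_compose_filterlim[OF norm_dir_deriv_at_top[OF rn \<delta>, of "- y" u] this]
  have ev: "\<forall>\<^sub>F N in sequentially. norm (real n *\<^sub>R - y + (- real n + real N) *\<^sub>R u) - (- real n + real N) * norm u
      \<le> real n * norm_dir_deriv u (- y) + \<delta>" .
  have "real n *\<^sub>R (y + u) - real N *\<^sub>R u = - (real n *\<^sub>R - y + (- real n + real N) *\<^sub>R u)" for N
    by (simp add: algebra_simps)
  then have eq: "norm (real n *\<^sub>R (y + u) - real N *\<^sub>R u) - real N * norm u
      = (norm (real n *\<^sub>R - y + (- real n + real N) *\<^sub>R u) - (- real n + real N) * norm u) - real n * norm u" for N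
    by (simp only: norm_minus_cancel) (simp add: algebra_simps)
  show "\<forall>\<^sub>F N in sequentially. norm (real n *\<^sub>R (y + u) - real N *\<^sub>R u) - real N * norm u
      \<le> real n * norm_dir_deriv u (- y) - real n * norm u + \<delta>"
    unfolding eq using ev by (rule eventually_mono) linarith
qed

end

section \<open>The isometry into the bidual\<close>

context generalized_limit
begin

lemma Blinfun_linear_le_norm:
  fixes \<phi> :: "'a::real_normed_vector \<Rightarrow> real"
  assumes \<phi>: "linear \<phi>" and le: "\<And>v. \<phi> v \<le> norm v"
  shows "blinfun_apply (Blinfun \<phi>) = \<phi>" and "norm (Blinfun \<phi>) \<le> 1"
proof -
  have abs_le: "\<bar>\<phi> v\<bar> \<le> norm v" for v
    using le[of v] le[of "- v"] linear_neg[OF \<phi>, of v] by simp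
  then have "bounded_linear \<phi>"
    using \<phi> by (intro bounded_linear_intro[where K = 1]) (simp_all add: linear_add linear_scale)
  then show applied: "blinfun_apply (Blinfun \<phi>) = \<phi>"
    by (rule bounded_linear_Blinfun_apply)
  show "norm (Blinfun \<phi>) \<le> 1"
    by (rule norm_blinfun_bound) (simp_all add: applied abs_le)
qed

lemma ray_horofunctions_sandwich:
  fixes f :: "'a::real_normed_vector \<Rightarrow> 'b::real_normed_vector" and u :: 'a
  assumes f: "eps_isometry \<epsilon> f"
  defines "r \<equiv> \<lambda>N. real N * norm u"
  shows "\<exists>\<phi> c. linear \<phi> \<and> (\<forall>v. \<phi> v \<le> norm v) \<and>
    (\<forall>q. - (horofunction (\<lambda>N. f (real N *\<^sub>R - u)) r q + \<epsilon>) \<le> \<phi> q + c \<and>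
         \<phi> q + c \<le> horofunction (\<lambda>N. f (real N *\<^sub>R u)) r q)"
proof -
  define P where "P N = f (real N *\<^sub>R u)" for N
  define Q where "Q N = f (real N *\<^sub>R - u)" for N
  have P: "Bseq (\<lambda>N. norm (P N - f 0) - r N)"
    unfolding P_def r_def by (rule Bseq_eps_isometry_ray[OF f])
  have Q: "Bseq (\<lambda>N. norm (Q N - f 0) - r N)"
    unfolding Q_def r_def using Bseq_eps_isometry_ray[OF f, of "- u"] by simp
  have far: "2 * r N - \<epsilon> \<le> norm (P N - Q N)" for N
  proof -
    have "norm (real N *\<^sub>R u - real N *\<^sub>R - u) = 2 * r N"
      unfolding r_def by (simp flip: scaleR_2 add: algebra_simps)
    then show ?thesis
      using eps_isometry_ge[OF f, of "real N *\<^sub>R u" "real N *\<^sub>R - u"] unfolding P_def Q_def by simp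
  qed
  define m where "m q = horofunction Q r q + \<epsilon>" for q
  have "convex_on UNIV m"
    unfolding m_def using horofunction_convex[OF Q] by (intro convex_on_add) (simp_all add: convex_on_const)
  moreover have "0 \<le> horofunction P r q + m q" for q
    unfolding m_def using horofunction_opposite_sum[OF P Q far, of q] by simp
  ultimately show ?thesis
    using linear_sandwich[of "horofunction P r" m] horofunction_convex[OF P] horofunction_lipschitz[OF P]
    unfolding m_def P_def Q_def by blast
qed

lemma norming_functional_exists:
  fixes f :: "'a::real_normed_vector \<Rightarrow> 'b::real_normed_vector"
  assumes f: "eps_isometry \<epsilon> f" and smooth: "norm_smooth_along (x - y) y"
  shows "\<exists>\<Phi> :: 'b \<Rightarrow>\<^sub>L real. norm \<Phi> \<le> 1 \<and>
    (\<forall>n>0. real n * norm (x - y) - 3 * \<epsilon> \<le> blinfun_apply \<Phi> (f (real n *\<^sub>R x) - f (real n *\<^sub>R y)))"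
proof -
  define u where "u = x - y"
  obtain \<phi> c where \<phi>: "linear \<phi>" "\<And>v. \<phi> v \<le> norm v"
    and between: "\<And>q. - (horofunction (\<lambda>N. f (real N *\<^sub>R - u)) (\<lambda>N. real N * norm u) q + \<epsilon>) \<le> \<phi> q + c"
      "\<And>q. \<phi> q + c \<le> horofunction (\<lambda>N. f (real N *\<^sub>R u)) (\<lambda>N. real N * norm u) q"
    using ray_horofunctions_sandwich[OF f, of u] by blast
  define \<Phi> where "\<Phi> = - Blinfun \<phi>"
  have "norm \<Phi> \<le> 1"
    using Blinfun_linear_le_norm(2)[OF \<phi>] by (simp add: \<Phi>_def)
  moreover have "real n * norm u - 3 * \<epsilon> \<le> blinfun_apply \<Phi> (f (real n *\<^sub>R x) - f (real n *\<^sub>R y))"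
    if n: "n > 0" for n
  proof -
    have "blinfun_apply \<Phi> (f (real n *\<^sub>R x) - f (real n *\<^sub>R y)) = \<phi> (f (real n *\<^sub>R y)) - \<phi> (f (real n *\<^sub>R x))"
      using linear_diff[OF \<phi>(1)]
      by (simp add: \<Phi>_def uminus_blinfun.rep_eq Blinfun_linear_le_norm(1)[OF \<phi>])
    moreover have "\<phi> (f (real n *\<^sub>R x)) + c \<le> real n * norm_dir_deriv u (- y) - real n * norm u + \<epsilon>"
      using between(2)[of "f (real n *\<^sub>R x)"] horofunction_opposite_ray_le[OF f n, of u y]
      unfolding u_def by simp
    moreover have "- (real n * norm_dir_deriv u y + 2 * \<epsilon>) \<le> \<phi> (f (real n *\<^sub>R y)) + c"
      using between(1)[of "f (real n *\<^sub>R y)"] horofunction_ray_le[OF f n, of u y] by simp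
    moreover have "real n * (norm_dir_deriv u y + norm_dir_deriv u (- y)) \<le> 0"
      using smooth unfolding norm_smooth_along_def u_def by (simp add: mult_nonneg_nonpos)
    ultimately show ?thesis
      by (simp add: algebra_simps)
  qed
  ultimately show ?thesis unfolding u_def by blast
qed

lemma norm_limit_map_diff_ge_smooth:
  assumes f: "eps_isometry \<epsilon> f" and smooth: "norm_smooth_along (x - y) y"
  shows "norm (x - y) \<le> norm (limit_map Blim f x - limit_map Blim f y)"
proof -
  obtain \<Phi> where \<Phi>: "norm \<Phi> \<le> 1"
    and lower: "\<And>n. n > 0 \<Longrightarrow> real n * norm (x - y) - 3 * \<epsilon> \<le> blinfun_apply \<Phi> (f (real n *\<^sub>R x) - f (real n *\<^sub>R y))"
    using norming_functional_exists[OF f smooth] by blast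
  have "norm (x - y) \<le> Blim (rescaled_difference f \<Phi> x y)"
  proof (rule ge_eventually_approx[OF Bseq_rescaled_difference[OF f]])
    fix \<delta> :: real assume \<delta>: "\<delta> > 0"
    have "\<forall>\<^sub>F n in sequentially. 3 * \<epsilon> / real n < \<delta> \<and> n > 0"
      using order_tendstoD(2)[OF lim_const_over_n \<delta>] eventually_gt_at_top[of 0]
      by (simp add: eventually_conj_iff)
    moreover have "norm (x - y) - \<delta> \<le> rescaled_difference f \<Phi> x y n"
      if "3 * \<epsilon> / real n < \<delta>" "n > 0" for n
    proof -
      have "norm (x - y) - 3 * \<epsilon> / real n = (real n * norm (x - y) - 3 * \<epsilon>) / real n"
        using that(2) by (simp add: field_simps)
      also have "\<dots> \<le> rescaled_difference f \<Phi> x y n"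
        unfolding rescaled_difference_def using lower[OF that(2)] by (simp add: divide_right_mono)
      finally show ?thesis using that(1) by linarith
    qed
    ultimately show "\<forall>\<^sub>F n in sequentially. norm (x - y) - \<delta> \<le> rescaled_difference f \<Phi> x y n"
      by (auto elim: eventually_mono)
  qed
  also have "\<dots> = blinfun_apply (limit_map Blim f x - limit_map Blim f y) \<Phi>"
    by (simp add: limit_map_diff_apply[OF f])
  also have "\<dots> \<le> norm (limit_map Blim f x - limit_map Blim f y) * norm \<Phi>"
    using norm_blinfun[of "limit_map Blim f x - limit_map Blim f y" \<Phi>] by simp
  also have "\<dots> \<le> norm (limit_map Blim f x - limit_map Blim f y)"
    using \<Phi> by (simp add: mult_left_le)
  finally show ?thesis .
qed

text \<open>Smooth pairs are dense, and both sides are 1-Lipschitz in \<open>x\<close>.\<close>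

lemma limit_map_isometric:
  assumes f: "eps_isometry \<epsilon> f"
  shows "norm (limit_map Blim f x - limit_map Blim f y) = norm (x - y)"
proof (rule antisym[OF norm_limit_map_diff_le[OF f]])
  let ?U = "limit_map Blim f"
  show "norm (x - y) \<le> norm (?U x - ?U y)"
  proof (rule field_le_epsilon)
    fix e :: real assume e: "e > 0"
    have ny: "norm y + 1 > 0" by (simp add: add_nonneg_pos)
    define \<delta> where "\<delta> = e / 2 / (norm y + 1)"
    have \<delta>: "\<delta> > 0"
      unfolding \<delta>_def using e ny by simp
    obtain s where s: "\<bar>s\<bar> < \<delta>" "norm_smooth_along ((x - y) + s *\<^sub>R y) y"
      using norm_smooth_along_dense[OF \<delta>] by blast
    define x' where "x' = x + s *\<^sub>R y"
    have "norm (x' - x) = \<bar>s\<bar> * norm y"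
      unfolding x'_def by simp
    also have "\<dots> \<le> \<delta> * (norm y + 1)"
      using s(1) by (intro mult_mono) auto
    also have "\<dots> = e / 2"
      unfolding \<delta>_def using ny by (metis less_irrefl nonzero_eq_divide_eq)
    finally have close: "norm (x' - x) \<le> e / 2" .
    have "norm (x - y) \<le> norm (x' - y) + norm (x' - x)"
      using norm_triangle_ineq4[of "x' - y" "x' - x"] by simp
    also have "norm (x' - y) \<le> norm (?U x' - ?U y)"
      by (rule norm_limit_map_diff_ge_smooth[OF f]) (use s(2) in \<open>simp add: x'_def algebra_simps\<close>)
    also have "norm (?U x' - ?U y) \<le> norm (?U x - ?U y) + norm (?U x' - ?U x)"
      using norm_triangle_ineq4[of "?U x' - ?U x" "?U y - ?U x"] by (simp add: norm_minus_commute)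
    also have "norm (?U x' - ?U x) \<le> norm (x' - x)"
      by (rule norm_limit_map_diff_le[OF f])
    finally show "norm (x - y) \<le> norm (?U x - ?U y) + e"
      using close by linarith
  qed
qed

end

theorem theorem3p3:
  fixes f :: "'a::banach \<Rightarrow> 'b::banach" and \<epsilon> :: real
  assumes "separable_space (euclidean :: 'a topology)"
    and "\<not> (\<exists>S :: 'b set. subspace S \<and> closed S \<and> isomorphic_to_ell1 S)"
    and "\<epsilon> > 0"
    and "eps_isometry \<epsilon> f"
  shows "\<exists>U :: 'a \<Rightarrow> (('b \<Rightarrow>\<^sub>L real) \<Rightarrow>\<^sub>L real).
           \<forall>x y. norm (U x - U y) = norm (x - y)"
proof -
  obtain Blim where "generalized_limit Blim"
    using generalized_limit_exists by blast
  then interpret generalized_limit Blim .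
  show ?thesis
    using limit_map_isometric[OF assms(4)] by blast
qed

end
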